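(* For every integer $n\ge 3$ there exist a boolean classifier $\kappa:\{0,1\}^n\to\{0,1\}$ and a point $\mathbf v\in\{0,1\}^n$ such that, for the explanation problem with sample $(\mathbf v,\kappa(\mathbf v))$, some feature $i\in\mathcal F=\{1,\dots,n\}$ is irrelevant and $\mathrm{Sv}(i)\neq 0$ (issue I1).
   Context: Let $\mathcal F=\{1,\dots,n\}$. A boolean classifier is a non-constant function $\kappa:\{0,1\}^n\to\{0,1\}$; a sample is a pair $(\mathbf v,c)$ with $\mathbf v\in\{0,1\}^n$ and $c=\kappa(\mathbf v)$. For $\mathcal S\subseteq\mathcal F$ let $\Upsilon(\mathcal S;\mathbf v)=\{\mathbf x\in\{0,1\}^n : x_j=v_j \text{ for all } j\in\mathcal S\}$ and, for any function $g$ on $\{0,1\}^n$, $\mathbf E[g\mid \mathbf x_{\mathcal S}=\mathbf v_{\mathcal S}]=|\Upsilon(\mathcal S;\mathbf v)|^{-1}\sum_{\mathbf x\in\Upsilon(\mathcal S;\mathbf v)}g(\mathbf x)$ (uniform distribution, independent features). The characteristic function is $\upsilon(\mathcal S)=\mathbf E[\kappa\mid\mathbf x_{\mathcal S}=\mathbf v_{\mathcal S}]$, and the SHAP score of feature $i$ is $\mathrm{Sv}(i)=\sum_{\mathcal S\subseteq\mathcal F\setminus\{i\}}\frac{|\mathcal S|!\,(n-|\mathcal S|-1)!}{n!}\big(\upsilon(\mathcal S\cup\{i\})-\upsilon(\mathcal S)\big)$. The similarity predicate is $\sigma(\mathbf x)=1$ if $\kappa(\mathbf x)=\kappa(\mathbf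 v)$ and $0$ otherwise. A set $\mathcal S\subseteq\mathcal F$ is a weak abductive explanation (WAXp) if $\mathbf E[\sigma\mid\mathbf x_{\mathcal S}=\mathbf v_{\mathcal S}]=1$ (i.e. $\kappa(\mathbf x)=\kappa(\mathbf v)$ for all $\mathbf x\in\Upsilon(\mathcal S;\mathbf v)$); an abductive explanation (AXp) is a WAXp $\mathcal S$ such that $\mathcal S\setminus\{t\}$ is not a WAXp for every $t\in\mathcal S$. A feature is relevant if it belongs to at least one AXp, and irrelevant otherwise. *)

theory Defs
  imports "HOL-Analysis.Analysis"
begin

text \<open>A point of \<open>{0,1}^n\<close> is a function \<open>nat \<Rightarrow> bool\<close>
  (True = 1) that is False (canonically 0) outside \<open>{1..n}\<close>.\<close>

definition points :: "nat \<Rightarrow> (nat \<Rightarrow> bool) set" where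
  "points n = {x. \<forall>j. j \<notin> {1..n} \<longrightarrow> x j = False}"

definition feats :: "nat \<Rightarrow> nat set" where
  "feats n = {1..n}"

definition is_classifier :: "nat \<Rightarrow> ((nat \<Rightarrow> bool) \<Rightarrow> bool) \<Rightarrow> bool" where
  "is_classifier n \<kappa> \<longleftrightarrow> (\<exists>x\<in>points n. \<exists>y\<in>points n. \<kappa> x \<noteq> \<kappa> y)"

definition Upsilon :: "nat \<Rightarrow> nat set \<Rightarrow> (nat \<Rightarrow> bool) \<Rightarrow> (nat \<Rightarrow> bool) set" where
  "Upsilon n S v = {x \<in> points n. \<forall>j\<in>S. x j = v j}"

definition cond_exp :: "nat \<Rightarrow> ((nat \<Rightarrow> bool) \<Rightarrow> real) \<Rightarrow> nat set \<Rightarrow> (nat \<Rightarrow> bool) \<Rightarrow> real" where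
  "cond_exp n g S v = (\<Sum>x\<in>Upsilon n S v. g x) / real (card (Upsilon n S v))"

definition charfun :: "nat \<Rightarrow> ((nat \<Rightarrow> bool) \<Rightarrow> bool) \<Rightarrow> (nat \<Rightarrow> bool) \<Rightarrow> nat set \<Rightarrow> real" where
  "charfun n \<kappa> v S = cond_exp n (\<lambda>x. if \<kappa> x then 1 else 0) S v"

definition shap :: "nat \<Rightarrow> ((nat \<Rightarrow> bool) \<Rightarrow> bool) \<Rightarrow> (nat \<Rightarrow> bool) \<Rightarrow> nat \<Rightarrow> real" where
  "shap n \<kappa> v i = (\<Sum>S\<in>Pow (feats n - {i}).
      (fact (card S) * fact (n - card S - 1) / fact n) *
      (charfun n \<kappa> v (S \<union> {i}) - charfun n \<kappa> v S))"

definition similar :: "((nat \<Rightarrow> bool) \<Rightarrow> bool) \<Rightarrow> (nat \<Rightarrow> bool) \<Rightarrow> (nat \<Rightarrow> bool) \<Rightarrow> real" where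
  "similar \<kappa> v x = (if \<kappa> x = \<kappa> v then 1 else 0)"

definition WAXp :: "nat \<Rightarrow> ((nat \<Rightarrow> bool) \<Rightarrow> bool) \<Rightarrow> (nat \<Rightarrow> bool) \<Rightarrow> nat set \<Rightarrow> bool" where
  "WAXp n \<kappa> v S \<longleftrightarrow> S \<subseteq> feats n \<and> cond_exp n (similar \<kappa> v) S v = 1"

definition AXp :: "nat \<Rightarrow> ((nat \<Rightarrow> bool) \<Rightarrow> bool) \<Rightarrow> (nat \<Rightarrow> bool) \<Rightarrow> nat set \<Rightarrow> bool" where
  "AXp n \<kappa> v S \<longleftrightarrow> WAXp n \<kappa> v S \<and> (\<forall>t\<in>S. \<not> WAXp n \<kappa> v (S - {t}))"

definition relevant :: "nat \<Rightarrow> ((nat \<Rightarrow> bool) \<Rightarrow> bool) \<Rightarrow> (nat \<Rightarrow> bool) \<Rightarrow> nat \<Rightarrow> bool" where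
  "relevant n \<kappa> v i \<longleftrightarrow> (\<exists>S. AXp n \<kappa> v S \<and> i \<in> S)"

definition irrelevant :: "nat \<Rightarrow> ((nat \<Rightarrow> bool) \<Rightarrow> bool) \<Rightarrow> (nat \<Rightarrow> bool) \<Rightarrow> nat \<Rightarrow> bool" where
  "irrelevant n \<kappa> v i \<longleftrightarrow> \<not> relevant n \<kappa> v i"

end

theory Submission
  imports Defs
begin

text \<open>Take \<open>\<kappa>(x) = \<not>x\<^sub>1 \<and> \<not>x\<^sub>2 \<and> \<not>x\<^sub>3\<close> and \<open>v = (0,1,1,0,\<dots>,0)\<close>, so \<open>\<kappa>(v) = 0\<close>.
  Every WAXp must fix feature 2 or 3, and that alone already forces \<open>\<kappa> = 0\<close>; hence feature 1
  can be dropped from any WAXp and is irrelevant. On the other hand \<open>\<kappa>\<close> vanishes whenever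
  \<open>x\<^sub>1 = 1\<close>, so fixing \<open>x\<^sub>1 = v\<^sub>1 = 0\<close> exactly doubles the conditional expectation of \<open>\<kappa>\<close>.
  All marginal contributions of feature 1 are therefore nonnegative, and the one for \<open>\<emptyset>\<close>
  is positive, so \<open>Sv(1) > 0\<close>.\<close>

lemma points_eq_image_Pow: "points n = (\<lambda>A j. j \<in> A) ` Pow {1..n}"
proof
  show "points n \<subseteq> (\<lambda>A j. j \<in> A) ` Pow {1..n}"
  proof
    fix x assume "x \<in> points n"
    then have "x = (\<lambda>j. j \<in> {j\<in>{1..n}. x j})" by (auto simp: points_def)
    then show "x \<in> (\<lambda>A j. j \<in> A) ` Pow {1..n}" by blast
  qed
qed (auto simp: points_def)

lemma finite_points: "finite (points n)"
  by (simp add: points_eq_image_Pow)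

lemma finite_Upsilon: "finite (Upsilon n S v)"
  by (simp add: Upsilon_def finite_points)

lemma self_in_Upsilon: "v \<in> points n \<Longrightarrow> v \<in> Upsilon n S v"
  by (simp add: Upsilon_def)

lemma WAXp_iff:
  assumes "v \<in> points n"
  shows "WAXp n \<kappa> v S \<longleftrightarrow> S \<subseteq> feats n \<and> (\<forall>x\<in>Upsilon n S v. \<kappa> x = \<kappa> v)"
proof -
  let ?U = "Upsilon n S v"
  have card_pos: "card ?U > 0"
    using finite_Upsilon self_in_Upsilon[OF assms] card_gt_0_iff by blast
  have "cond_exp n (similar \<kappa> v) S v = 1 \<longleftrightarrow> (\<Sum>x\<in>?U. 1 - similar \<kappa> v x) = 0"
    using card_pos by (simp add: cond_exp_def sum_subtractf)
  also have "\<dots> \<longleftrightarrow> (\<forall>x\<in>?U. \<kappa> x = \<kappa> v)"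
    by (subst sum_nonneg_eq_0_iff) (auto simp: finite_Upsilon similar_def)
  finally show ?thesis unfolding WAXp_def by blast
qed

text \<open>Flipping feature \<open>i\<close> matches the points agreeing with \<open>v\<close> on \<open>i\<close> bijectively with
  those disagreeing.\<close>

lemma card_Upsilon_eq_double:
  assumes "i \<in> feats n" "i \<notin> S"
  shows "card (Upsilon n S v) = 2 * card (Upsilon n (insert i S) v)"
proof -
  let ?agree = "Upsilon n (insert i S) v"
  let ?differ = "{x \<in> Upsilon n S v. x i \<noteq> v i}"
  have flip: "bij_betw (\<lambda>x. x(i := \<not> v i)) ?agree ?differ"
    by (rule bij_betw_byWitness[where f' = "\<lambda>x. x(i := v i)"])
       (use assms in \<open>auto simp: Upsilon_def points_def feats_def fun_eq_iff split: if_split_asm\<close>)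
  have "Upsilon n S v = ?agree \<union> ?differ"
    by (auto simp: Upsilon_def)
  also have "card \<dots> = card ?agree + card ?differ"
    by (rule card_Un_disjoint) (auto simp: Upsilon_def finite_points)
  finally show ?thesis using bij_betw_same_card[OF flip] by simp
qed

lemma charfun_nonneg: "charfun n \<kappa> v S \<ge> 0"
  by (simp add: charfun_def cond_exp_def sum_nonneg)

lemma charfun_eq_half_insert:
  assumes "i \<in> feats n" "i \<notin> S" and \<kappa>_forces: "\<And>x. \<kappa> x \<Longrightarrow> x i = v i"
  shows "charfun n \<kappa> v S = charfun n \<kappa> v (insert i S) / 2"
proof -
  have "(\<Sum>x\<in>Upsilon n S v. if \<kappa> x then 1 else 0) =
        (\<Sum>x\<in>Upsilon n (insert i S) v. if \<kappa> x then 1 else (0::real))"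
    by (rule sum.mono_neutral_right)
       (auto simp: finite_points Upsilon_def dest: \<kappa>_forces)
  then show ?thesis
    using card_Upsilon_eq_double[OF assms(1,2), of v] by (simp add: charfun_def cond_exp_def)
qed

lemma irrelevant_if_removable:
  assumes "\<And>S. WAXp n \<kappa> v S \<Longrightarrow> WAXp n \<kappa> v (S - {i})"
  shows "irrelevant n \<kappa> v i"
  using assms by (auto simp: irrelevant_def relevant_def AXp_def)

lemma shap_pos_if_marginals_nonneg:
  assumes "\<And>S. S \<subseteq> feats n - {i} \<Longrightarrow> charfun n \<kappa> v S \<le> charfun n \<kappa> v (insert i S)"
    and "charfun n \<kappa> v {} < charfun n \<kappa> v {i}"
  shows "shap n \<kappa> v i > 0"
  unfolding shap_def
proof (rule sum_pos2)
  show "finite (Pow (feats n - {i}))" by (simp add: feats_def)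
  show "{} \<in> Pow (feats n - {i})" by simp
  show "0 < fact (card {}) * fact (n - card {} - 1) / fact n *
            (charfun n \<kappa> v ({} \<union> {i}) - charfun n \<kappa> v {})"
    using assms(2) by simp
  show "0 \<le> fact (card S) * fact (n - card S - 1) / fact n *
            (charfun n \<kappa> v (S \<union> {i}) - charfun n \<kappa> v S)"
    if "S \<in> Pow (feats n - {i})" for S
    using assms(1)[of S] that by simp
qed

definition kappa3 :: "(nat \<Rightarrow> bool) \<Rightarrow> bool" where
  "kappa3 x \<longleftrightarrow> \<not> x 1 \<and> \<not> x 2 \<and> \<not> x 3"

definition v23 :: "nat \<Rightarrow> bool" where
  "v23 j \<longleftrightarrow> j = 2 \<or> j = 3"

lemma v23_in_points: "n \<ge> 3 \<Longrightarrow> v23 \<in> points n"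
  by (auto simp: points_def v23_def)

lemma zero_in_points: "(\<lambda>_. False) \<in> points n"
  by (simp add: points_def)

lemma is_classifier_kappa3: "n \<ge> 3 \<Longrightarrow> is_classifier n kappa3"
  unfolding is_classifier_def using zero_in_points v23_in_points
  by (intro bexI[of _ "\<lambda>_. False"] bexI[of _ v23]) (auto simp: kappa3_def v23_def)

lemma WAXp_kappa3_fixes_2_or_3:
  assumes "n \<ge> 3" "WAXp n kappa3 v23 S"
  shows "2 \<in> S \<or> 3 \<in> S"
proof (rule ccontr)
  assume "\<not> (2 \<in> S \<or> 3 \<in> S)"
  then have "(\<lambda>_. False) \<in> Upsilon n S v23"
    by (auto simp: Upsilon_def zero_in_points v23_def)
  then show False
    using assms by (auto simp: WAXp_iff v23_in_points kappa3_def v23_def)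
qed

lemma irrelevant_kappa3_1: "n \<ge> 3 \<Longrightarrow> irrelevant n kappa3 v23 1"
proof (rule irrelevant_if_removable)
  fix S assume "n \<ge> 3" "WAXp n kappa3 v23 S"
  then have "2 \<in> S \<or> 3 \<in> S" by (rule WAXp_kappa3_fixes_2_or_3)
  then have "\<forall>x\<in>Upsilon n (S - {1}) v23. kappa3 x = kappa3 v23"
    by (auto simp: Upsilon_def kappa3_def v23_def)
  with \<open>n \<ge> 3\<close> \<open>WAXp n kappa3 v23 S\<close> show "WAXp n kappa3 v23 (S - {1})"
    by (auto simp: WAXp_iff v23_in_points)
qed

lemma shap_kappa3_1_pos:
  assumes "n \<ge> 3"
  shows "shap n kappa3 v23 1 > 0"
proof -
  have "1 \<in> feats n" using assms by (simp add: feats_def)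
  then have halve: "charfun n kappa3 v23 S = charfun n kappa3 v23 (insert 1 S) / 2"
    if "1 \<notin> S" for S
    using that by (rule charfun_eq_half_insert) (simp add: kappa3_def v23_def)
  have "(\<lambda>_. False) \<in> Upsilon n {1} v23"
    by (simp add: Upsilon_def zero_in_points v23_def)
  then have "charfun n kappa3 v23 {1} > 0"
    unfolding charfun_def cond_exp_def
    by (intro divide_pos_pos sum_pos2) (auto simp: finite_Upsilon card_gt_0_iff kappa3_def)
  moreover have "charfun n kappa3 v23 S \<le> charfun n kappa3 v23 (insert 1 S)"
    if "S \<subseteq> feats n - {1}" for S
  proof -
    have "1 \<notin> S" using that by blast
    then show ?thesis using halve[of S] charfun_nonneg[of n kappa3 v23 "insert 1 S"] by simp
  qed
  ultimately show ?thesis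
    using halve[of "{}"] by (intro shap_pos_if_marginals_nonneg) auto
qed

theorem proposition1:
  fixes n :: nat
  assumes "n \<ge> 3"
  shows "\<exists>\<kappa> v. is_classifier n \<kappa> \<and> v \<in> points n \<and>
           (\<exists>i\<in>feats n. irrelevant n \<kappa> v i \<and> shap n \<kappa> v i \<noteq> 0)"
proof -
  have "1 \<in> feats n" using assms by (simp add: feats_def)
  moreover have "shap n kappa3 v23 1 \<noteq> 0" using shap_kappa3_1_pos[OF assms] by simp
  ultimately show ?thesis
    using is_classifier_kappa3[OF assms] v23_in_points[OF assms] irrelevant_kappa3_1[OF assms]
    by blast
qed

end
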